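(* Let $\phi(x,y,z)=\alpha x+\beta y+\gamma z$ with $\alpha,\beta,\gamma\in\mathbb{R}$ not all zero, and let $S\subset\mathbb{R}^3$ be a cyclic surface which is $\phi$-minimal. Then the planes containing the circles (or arcs of circles) of the foliation of $S$ are parallel to one another.
   Context: For a smooth oriented surface $S\subset\mathbb{R}^3$ with unit normal (Gauss map) $N$, let $H$ denote its mean curvature, normalized so that the mean curvature vector is $\Delta_S X = 2HN$ ($X$ the position vector, $\Delta_S$ the Laplace–Beltrami operator); e.g. for a graph $z=u(x,y)$ with upward normal, $2H=\operatorname{div}\big(\nabla u/\sqrt{1+|\nabla u|^2}\big)$. For the density $e^{\phi}$ on $\mathbb{R}^3$ with $\phi(x,y,z)=\alpha x+\beta y+\gamma z$ (a log-linear density), the vector $\vec v=(\alpha,\beta,\gamma)$ is called the $\phi$-density vector, and the $\phi$-mean curvature is $H_\phi = H-\tfrac12\frac{d\phi}{dN}=H-\tfrac12\langle N,\vec v\rangle$. $S$ is $\phi$-minimal if $H_\phi\equiv 0$, i.e. $H=\tfrac12\langle N,\vec v\rangle$ on $S$ (this condition is independent of the choice of orientation). A cyclic surface is a surface generated by a smooth one-parameter family of circles (not necessarily of the same radius), or of arcs of circles; i.e. locally $X(s,t)=\mathbf c(s)+r(s)(\cos t\,\mathbf e_1(s)+\sin t\,\mathbf e_2(s))$ with $r>0$, $\{\mathbf e_1(s),\mathbf e_2(s)\}$ orthonormal spanning the plane of the $s$-th circle, $t$ in an interval. The result is local. *)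

theory Defs
  imports "HOL-Analysis.Analysis"
begin

definition smooth_on :: "real set \<Rightarrow> (real \<Rightarrow> 'a::real_normed_vector) \<Rightarrow> bool" where
  "smooth_on U f \<longleftrightarrow> (\<exists>D::nat \<Rightarrow> real \<Rightarrow> 'a. (\<forall>x\<in>U. D 0 x = f x) \<and>
      (\<forall>n. \<forall>x\<in>U. (D n has_vector_derivative D (Suc n) x) (at x)))"

definition cyclic_param ::
  "(real \<Rightarrow> real^3) \<Rightarrow> (real \<Rightarrow> real) \<Rightarrow> (real \<Rightarrow> real^3) \<Rightarrow> (real \<Rightarrow> real^3)
   \<Rightarrow> real \<Rightarrow> real \<Rightarrow> real^3" where
  "cyclic_param c r e1 e2 = (\<lambda>s t. c s + r s *\<^sub>R (cos t *\<^sub>R e1 s + sin t *\<^sub>R e2 s))"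

definition Xs :: "(real \<Rightarrow> real \<Rightarrow> real^3) \<Rightarrow> real \<Rightarrow> real \<Rightarrow> real^3" where
  "Xs X s t = vector_derivative (\<lambda>\<sigma>. X \<sigma> t) (at s)"
definition Xt :: "(real \<Rightarrow> real \<Rightarrow> real^3) \<Rightarrow> real \<Rightarrow> real \<Rightarrow> real^3" where
  "Xt X s t = vector_derivative (\<lambda>\<tau>. X s \<tau>) (at t)"

definition unit_normal :: "(real \<Rightarrow> real \<Rightarrow> real^3) \<Rightarrow> real \<Rightarrow> real \<Rightarrow> real^3" where
  "unit_normal X s t = (1 / norm (cross3 (Xs X s t) (Xt X s t))) *\<^sub>R (cross3 (Xs X s t) (Xt X s t))"

text \<open>Mean curvature H = (eG - 2fF + gE)/(2(EG - F^2)), normalised so that the mean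
  curvature vector is 2HN (Laplace-Beltrami of X equals 2HN).\<close>
definition mean_curv :: "(real \<Rightarrow> real \<Rightarrow> real^3) \<Rightarrow> real \<Rightarrow> real \<Rightarrow> real" where
  "mean_curv X s t =
    (let Xu = Xs X s t; Xv = Xt X s t;
         Xuu = Xs (Xs X) s t; Xuv = Xt (Xs X) s t; Xvv = Xt (Xt X) s t;
         N = unit_normal X s t;
         E = Xu \<bullet> Xu; F = Xu \<bullet> Xv; G = Xv \<bullet> Xv;
         e = Xuu \<bullet> N; f = Xuv \<bullet> N; g = Xvv \<bullet> N
     in (e * G - 2 * f * F + g * E) / (2 * (E * G - F\<^sup>2)))"

end

theory Submission
  imports Defs "HOL-Computational_Algebra.Polynomial"
begin

text \<open>
  Work in the moving orthonormal frame \<open>(e1, e2, N)\<close> of the circles, \<open>N = e1 \<times> e2\<close>. With its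
  denominator cleared, \<open>\<phi>\<close>-minimality along the circle with parameter \<open>s\<close> says that a trigonometric
  polynomial \<open>\<Sum>k\<le>4. (A\<^sub>k + B\<^sub>k sin t) cos\<^sup>k t\<close> vanishes on an open interval, so all
  \<open>A\<^sub>k, B\<^sub>k\<close> vanish. The planes are parallel iff the tilts \<open>b = N\<cdot>e1'\<close>, \<open>d = N\<cdot>e2'\<close> vanish,
  because \<open>N' = - b e1 - d e2\<close>. If \<open>(b, d) \<noteq> 0\<close> near some \<open>s\<close>, then either the density vector
  \<open>v\<close> is normal to the planes nearby, and differentiating \<open>e1\<cdot>v = e2\<cdot>v = 0\<close> gives
  \<open>b (N\<cdot>v) = d (N\<cdot>v) = 0\<close>, which is impossible; or \<open>A\<^sub>4 = B\<^sub>3 = 0\<close> impose two relations between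
  \<open>c'\<close> and the tilts on an open set, and these relations, their derivatives and the next
  coefficients force the components of \<open>v\<close> in the planes to vanish.
\<close>

section \<open>Coordinates in an orthonormal frame\<close>

definition orthonormal_pair :: "real^3 \<Rightarrow> real^3 \<Rightarrow> bool" where
  "orthonormal_pair e1 e2 \<longleftrightarrow> norm e1 = 1 \<and> norm e2 = 1 \<and> e1 \<bullet> e2 = 0"

definition frame_coords :: "real^3 \<Rightarrow> real^3 \<Rightarrow> real^3 \<Rightarrow> real^3" where
  "frame_coords e1 e2 x = vector [e1 \<bullet> x, e2 \<bullet> x, cross3 e1 e2 \<bullet> x]"

lemma frame_coords_add [simp]: "frame_coords e1 e2 (x + y) = frame_coords e1 e2 x + frame_coords e1 e2 y"
  and frame_coords_diff [simp]: "frame_coords e1 e2 (x - y) = frame_coords e1 e2 x - frame_coords e1 e2 y"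
  and frame_coords_minus [simp]: "frame_coords e1 e2 (- x) = - frame_coords e1 e2 x"
  and frame_coords_scaleR [simp]: "frame_coords e1 e2 (k *\<^sub>R x) = k *\<^sub>R frame_coords e1 e2 x"
  and frame_coords_zero [simp]: "frame_coords e1 e2 0 = 0"
  by (simp_all add: frame_coords_def vec_eq_iff forall_3 inner_add_right inner_diff_right)

lemma vector3_arith [simp]:
  fixes a1 a2 a3 b1 b2 b3 k :: real
  shows "vector [a1, a2, a3] + vector [b1, b2, b3] = (vector [a1 + b1, a2 + b2, a3 + b3] :: real^3)"
    and "vector [a1, a2, a3] - vector [b1, b2, b3] = (vector [a1 - b1, a2 - b2, a3 - b3] :: real^3)"
    and "- vector [a1, a2, a3] = (vector [- a1, - a2, - a3] :: real^3)"
    and "k *\<^sub>R vector [a1, a2, a3] = (vector [k * a1, k * a2, k * a3] :: real^3)"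
    and "vector [a1, a2, a3] = (vector [b1, b2, b3] :: real^3) \<longleftrightarrow> a1 = b1 \<and> a2 = b2 \<and> a3 = b3"
    and "vector [a1, a2, a3] = (0 :: real^3) \<longleftrightarrow> a1 = 0 \<and> a2 = 0 \<and> a3 = 0"
  by (simp_all add: vec_eq_iff forall_3)

lemma vector3_inner: "(vector [a1, a2, a3] :: real^3) \<bullet> vector [b1, b2, b3] = a1 * b1 + a2 * b2 + a3 * b3"
  by (simp add: inner_vec_def sum_3)

lemma vector3_cross:
  "cross3 (vector [a1, a2, a3]) (vector [b1, b2, b3])
     = (vector [a2 * b3 - a3 * b2, a3 * b1 - a1 * b3, a1 * b2 - a2 * b1] :: real^3)"
  by (simp add: cross3_simps)

lemma rotation_matrix_frame:
  assumes "orthonormal_pair e1 e2"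
  shows "rotation_matrix (vector [e1, e2, cross3 e1 e2] :: real^3^3)"
proof -
  define n where "n = cross3 e1 e2"
  define A where "A = (vector [e1, e2, n] :: real^3^3)"
  have unit: "e1 \<bullet> e1 = 1" "e2 \<bullet> e2 = 1" "e1 \<bullet> e2 = 0" "n \<bullet> n = 1"
    using assms norm_cross_dot[of e1 e2]
    by (simp_all add: orthonormal_pair_def n_def dot_square_norm flip: power2_norm_eq_inner)
  have entry: "(A ** transpose A) $ i $ j = A $ i \<bullet> A $ j" for i j
    by (simp add: matrix_matrix_mult_def transpose_def inner_vec_def mult.commute)
  have "A ** transpose A = mat 1"
    using unit dot_cross_self[of e1 e2] unfolding vec_eq_iff forall_3 entry
    by (simp add: mat_def A_def n_def inner_commute)
  then have orth: "orthogonal_matrix A"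
    by (simp add: orthogonal_matrix_def matrix_left_right_inverse)
  have "det A = e1 \<bullet> cross3 e2 n"
    by (simp add: A_def dot_cross_det)
  also have "\<dots> = 1"
    using unit by (simp add: n_def cross3_simps)
  finally show ?thesis
    using orth by (simp add: rotation_matrix_def A_def n_def)
qed

lemma frame_coords_eq_matrix_mult: "frame_coords e1 e2 = (*v) (vector [e1, e2, cross3 e1 e2])"
  by (simp add: fun_eq_iff frame_coords_def vec_eq_iff forall_3 matrix_vector_mult_def inner_vec_def sum_3)

context
  fixes e1 e2 :: "real^3"
  assumes orthonormal: "orthonormal_pair e1 e2"
begin

lemma frame_coords_inner: "frame_coords e1 e2 x \<bullet> frame_coords e1 e2 y = x \<bullet> y"
proof -
  have "orthogonal_transformation (frame_coords e1 e2)"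
    using rotation_matrix_frame[OF orthonormal]
    by (simp add: frame_coords_eq_matrix_mult orthogonal_transformation_matrix rotation_matrix_def
        matrix_vector_mul_linear)
  then show ?thesis
    by (simp add: orthogonal_transformation_def)
qed

lemma frame_coords_cross: "frame_coords e1 e2 (cross3 x y) = cross3 (frame_coords e1 e2 x) (frame_coords e1 e2 y)"
  using cross_rotation_matrix[OF rotation_matrix_frame[OF orthonormal]]
  by (simp add: frame_coords_eq_matrix_mult)

lemma frame_coords_inject: "frame_coords e1 e2 x = frame_coords e1 e2 y \<longleftrightarrow> x = y"
  using frame_coords_inner[of "x - y" "x - y"] by auto

lemma frame_coords_basis:
  "frame_coords e1 e2 e1 = vector [1, 0, 0]"
  "frame_coords e1 e2 e2 = vector [0, 1, 0]"
  "frame_coords e1 e2 (cross3 e1 e2) = vector [0, 0, 1]"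
  using orthonormal norm_cross_dot[of e1 e2]
  by (simp_all add: frame_coords_def orthonormal_pair_def dot_cross_self inner_commute
      flip: power2_norm_eq_inner)

end

lemma has_real_derivative_const_on_open_eq_0:
  fixes f :: "real \<Rightarrow> real"
  assumes "open U" "x \<in> U" "\<And>y. y \<in> U \<Longrightarrow> f y = k" "(f has_real_derivative D) (at x)"
  shows "D = 0"
proof -
  obtain e where "e > 0" "ball x e \<subseteq> U"
    using assms(1,2) open_contains_ball by blast
  moreover have "\<forall>y. \<bar>x - y\<bar> < e \<longrightarrow> f x = f y"
    using \<open>ball x e \<subseteq> U\<close> assms(2,3) by (auto simp: dist_real_def)
  ultimately show ?thesis
    using DERIV_local_const assms(4) by blast
qed

lemma has_real_derivative_inner:
  fixes f g :: "real \<Rightarrow> 'a::real_inner"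
  assumes "(f has_vector_derivative f') (at x)" "(g has_vector_derivative g') (at x)"
  shows "((\<lambda>s. f s \<bullet> g s) has_real_derivative f x \<bullet> g' + f' \<bullet> g x) (at x)"
  using bounded_bilinear.has_vector_derivative[OF bounded_bilinear_inner assms]
  by (simp add: has_real_derivative_iff_has_vector_derivative)

lemma has_vector_derivative_cross3:
  assumes "(f has_vector_derivative f') (at x)" "(g has_vector_derivative g') (at x)"
  shows "((\<lambda>s. cross3 (f s) (g s)) has_vector_derivative cross3 (f x) g' + cross3 f' (g x)) (at x)"
  using bilinear_cross bilinear_conv_bounded_bilinear
  by (blast intro: bounded_bilinear.has_vector_derivative[OF _ assms])

lemma has_vector_derivative_trig_comb:
  fixes A B C :: "'a::real_normed_vector"
  shows "((\<lambda>\<tau>. C + cos \<tau> *\<^sub>R A + sin \<tau> *\<^sub>R B) has_vector_derivative cos t *\<^sub>R B - sin t *\<^sub>R A) (at t)"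
  by (auto intro!: derivative_eq_intros simp: algebra_simps)

lemma has_vector_derivative_trig_comb_coeffs:
  fixes A B C :: "real \<Rightarrow> 'a::real_normed_vector"
  assumes "(C has_vector_derivative C') (at s)" "(A has_vector_derivative A') (at s)"
    "(B has_vector_derivative B') (at s)"
  shows "((\<lambda>\<sigma>. C \<sigma> + cos t *\<^sub>R A \<sigma> + sin t *\<^sub>R B \<sigma>) has_vector_derivative C' + cos t *\<^sub>R A' + sin t *\<^sub>R B')
           (at s)"
  using assms by (auto intro!: derivative_eq_intros)

lemma smooth_on_imp_has_vector_derivative2:
  fixes f :: "real \<Rightarrow> 'a::real_normed_vector"
  assumes "smooth_on U f" "open U"
  obtains f' f'' where "\<And>x. x \<in> U \<Longrightarrow> (f has_vector_derivative f' x) (at x)"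
    and "\<And>x. x \<in> U \<Longrightarrow> (f' has_vector_derivative f'' x) (at x)"
proof -
  obtain D where D0: "\<And>x. x \<in> U \<Longrightarrow> D 0 x = f x"
    and D: "\<And>n x. x \<in> U \<Longrightarrow> (D n has_vector_derivative D (Suc n) x) (at x)"
    using assms(1) unfolding smooth_on_def by blast
  have "(f has_vector_derivative D 1 x) (at x)" if "x \<in> U" for x
    using D[of x 0] D0 that by (auto intro: has_vector_derivative_transform_within_open[OF _ assms(2)])
  moreover have "(D 1 has_vector_derivative D 2 x) (at x)" if "x \<in> U" for x
    using D[OF that, of 1] by (simp add: numeral_2_eq_2)
  ultimately show thesis
    by (rule that)
qed

section \<open>Trigonometric polynomials vanishing on an open set\<close>

lemma infinite_cos_image:
  fixes J :: "real set"
  assumes "open J" "J \<noteq> {}"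
  shows "infinite (cos ` J)"
proof
  assume fin: "finite (cos ` J)"
  obtain t0 e where "t0 \<in> J" and e: "e > 0" "ball t0 e \<subseteq> J"
    using assms open_contains_ball by blast
  have "finite (cos ` ball t0 e)"
    by (rule finite_subset[OF image_mono[OF e(2)] fin])
  moreover have "connected (cos ` ball t0 e)"
    by (intro connected_continuous_image continuous_intros) auto
  ultimately obtain a where "cos ` ball t0 e = {a}"
    using connected_finite_iff_sing e(1) by fastforce
  then have cos_const: "cos t = a" if "t \<in> ball t0 e" for t
    using that by blast
  have sin_0: "sin t = 0" if "t \<in> ball t0 e" for t
    using has_real_derivative_const_on_open_eq_0[OF open_ball that cos_const DERIV_cos] by simp
  have "cos t0 = 0"
    by (rule has_real_derivative_const_on_open_eq_0[OF open_ball _ sin_0 DERIV_sin]) (use e(1) in auto)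
  then show False
    using sin_0[of t0] e(1) sin_cos_squared_add[of t0] by simp
qed

lemma trig_poly_eq_0_imp_coeffs_eq_0:
  fixes A B :: "nat \<Rightarrow> real" and J :: "real set"
  assumes "open J" "J \<noteq> {}"
    and vanish: "\<And>t. t \<in> J \<Longrightarrow> (\<Sum>k\<le>n. (A k + B k * sin t) * cos t ^ k) = 0"
    and "k \<le> n"
  shows "A k = 0 \<and> B k = 0"
proof -
  define fA where "fA = (\<Sum>k\<le>n. monom (A k) k)"
  define fB where "fB = (\<Sum>k\<le>n. monom (B k) k)"
  define g where "g = fA * fA - [:1, 0, -1:] * fB * fB"
  have poly_g: "poly g x = (poly fA x)\<^sup>2 - (1 - x\<^sup>2) * (poly fB x)\<^sup>2" for x
    by (simp add: g_def power2_eq_square algebra_simps)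
  have "poly g (cos t) = 0" if "t \<in> J" for t
  proof -
    have "(\<Sum>k\<le>n. (A k + B k * sin t) * cos t ^ k) = poly fA (cos t) + sin t * poly fB (cos t)"
      by (simp add: fA_def fB_def poly_sum poly_monom sum.distrib sum_distrib_left algebra_simps)
    then have "poly fA (cos t) = - sin t * poly fB (cos t)"
      using vanish[OF that] by simp
    then show ?thesis
      by (simp add: poly_g power_mult_distrib sin_squared_eq)
  qed
  then have "cos ` J \<subseteq> {x. poly g x = 0}"
    by auto
  then have "g = 0"
    using infinite_cos_image[OF assms(1,2)] poly_roots_finite[of g] finite_subset by blast
  then have roots: "poly fA x = 0 \<and> poly fB x = 0" if "x > 1" for x
  proof -
    have "(poly fA x)\<^sup>2 + (x\<^sup>2 - 1) * (poly fB x)\<^sup>2 = 0"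
      using poly_g[of x] \<open>g = 0\<close> by (simp add: algebra_simps)
    moreover have "x\<^sup>2 - 1 > 0"
      using that by (simp add: one_less_power)
    ultimately show ?thesis
      by (metis add_nonneg_eq_0_iff mult_eq_0_iff power_eq_0_iff zero_le_power2
          mult_nonneg_nonneg less_eq_real_def less_irrefl)
  qed
  have "{1<..} \<subseteq> {x. poly fA x = 0}" "{1<..} \<subseteq> {x. poly fB x = 0}"
    using roots by auto
  then have "fA = 0" "fB = 0"
    using infinite_Ioi[of "1::real"] poly_roots_finite[of fA] poly_roots_finite[of fB] finite_subset
    by blast+
  moreover have "coeff fA k = A k" "coeff fB k = B k"
    using \<open>k \<le> n\<close> by (simp_all add: fA_def fB_def coeff_sum coeff_monom)
  ultimately show ?thesis
    by simp
qed

section \<open>The numerator of the \<open>\<phi>\<close>-mean curvature\<close>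

text \<open>With \<open>W = Xu \<times> Xv\<close> this is \<open>2 |W|\<^sup>3 H\<^sub>\<phi>\<close>.\<close>

definition phi_mean_curv_numerator ::
  "real^3 \<Rightarrow> real^3 \<Rightarrow> real^3 \<Rightarrow> real^3 \<Rightarrow> real^3 \<Rightarrow> real^3 \<Rightarrow> real" where
  "phi_mean_curv_numerator Xu Xv Xuu Xuv Xvv v =
    (let W = cross3 Xu Xv
     in (Xuu \<bullet> W) * (Xv \<bullet> Xv) - 2 * (Xuv \<bullet> W) * (Xu \<bullet> Xv) + (Xvv \<bullet> W) * (Xu \<bullet> Xu)
        - (W \<bullet> W) * (W \<bullet> v))"

lemma phi_minimal_imp_numerator_eq_0:
  fixes X :: "real \<Rightarrow> real \<Rightarrow> real^3"
  assumes regular: "cross3 (Xs X s t) (Xt X s t) \<noteq> 0"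
    and phi_minimal: "mean_curv X s t = 1/2 * (unit_normal X s t \<bullet> v)"
  shows "phi_mean_curv_numerator (Xs X s t) (Xt X s t) (Xs (Xs X) s t) (Xt (Xs X) s t) (Xt (Xt X) s t) v = 0"
proof -
  define Xu Xv Xuu Xuv Xvv where "Xu = Xs X s t" and "Xv = Xt X s t" and "Xuu = Xs (Xs X) s t"
    and "Xuv = Xt (Xs X) s t" and "Xvv = Xt (Xt X) s t"
  define W where "W = cross3 Xu Xv"
  define w where "w = norm W"
  define A where "A = (Xuu \<bullet> W) * (Xv \<bullet> Xv) - 2 * (Xuv \<bullet> W) * (Xu \<bullet> Xv) + (Xvv \<bullet> W) * (Xu \<bullet> Xu)"
  have "w > 0"
    using regular by (simp add: w_def W_def Xu_def Xv_def)
  have gram: "(Xu \<bullet> Xu) * (Xv \<bullet> Xv) - (Xu \<bullet> Xv)\<^sup>2 = w\<^sup>2"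
    using norm_cross_dot[of Xu Xv]
    by (simp add: w_def W_def power_mult_distrib flip: power2_norm_eq_inner)
  have "mean_curv X s t = A / w / (2 * w\<^sup>2)"
    unfolding mean_curv_def unit_normal_def Let_def gram[unfolded Xu_def Xv_def]
    by (simp add: A_def W_def w_def Xu_def Xv_def Xuu_def Xuv_def Xvv_def divide_simps)
  moreover have "unit_normal X s t \<bullet> v = (W \<bullet> v) / w"
    by (simp add: unit_normal_def W_def w_def Xu_def Xv_def)
  ultimately have "A = w\<^sup>2 * (W \<bullet> v)"
    using phi_minimal \<open>w > 0\<close> by (simp add: field_simps power2_eq_square)
  moreover have "W \<bullet> W = w\<^sup>2"
    by (simp add: w_def power2_norm_eq_inner)
  ultimately show ?thesis
    by (simp add: phi_mean_curv_numerator_def A_def flip: W_def Xu_def Xv_def Xuu_def Xuv_def Xvv_def)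
qed

lemma phi_mean_curv_numerator_frame_coords:
  assumes "orthonormal_pair e1 e2"
  shows "phi_mean_curv_numerator (frame_coords e1 e2 Xu) (frame_coords e1 e2 Xv) (frame_coords e1 e2 Xuu)
           (frame_coords e1 e2 Xuv) (frame_coords e1 e2 Xvv) (frame_coords e1 e2 v)
         = phi_mean_curv_numerator Xu Xv Xuu Xuv Xvv v"
  by (simp add: phi_mean_curv_numerator_def Let_def frame_coords_inner[OF assms]
      flip: frame_coords_cross[OF assms])

text \<open>
  The coefficients \<open>A\<^sub>k\<close> of \<open>cos\<^sup>k t\<close> and \<open>B\<^sub>k\<close> of \<open>sin t cos\<^sup>k t\<close> in the numerator for a cyclic surface,
  computed by expanding it in the frame \<open>(e1, e2, N)\<close> of the circle (the expansion is verified
  below). The arguments are the radius \<open>r\<close> and its derivatives, the frame coordinates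
  \<open>(p, q, m)\<close> of \<open>c'\<close> and \<open>(p2, q2, m2)\<close> of \<open>c''\<close>, the connection coefficients
  \<open>a = e2\<cdot>e1'\<close>, \<open>b = N\<cdot>e1'\<close>, \<open>d = N\<cdot>e2'\<close>, the normal components \<open>n1 = N\<cdot>e1''\<close>, \<open>n2 = N\<cdot>e2''\<close>
  and the frame coordinates \<open>(v1, v2, v3)\<close> of the density vector.
\<close>

definition phi_coeff_cos ::
  "real \<Rightarrow> real \<Rightarrow> real \<Rightarrow> real \<Rightarrow> real \<Rightarrow> real \<Rightarrow> real \<Rightarrow> real \<Rightarrow> real \<Rightarrow>
    real \<Rightarrow> real \<Rightarrow> real \<Rightarrow> real \<Rightarrow> real \<Rightarrow> real \<Rightarrow> real \<Rightarrow> real \<Rightarrow> nat \<Rightarrow> real"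
  where "phi_coeff_cos r r' r'' p q m p2 q2 m2 a b d n1 n2 v1 v2 v3 k =
    (if k = 0 then
       r^2 * m^3 + r^2 * q^2 * m + r^2 * p^2 * m + r^2 * r'^2 * m - r^3 * r'' * m + r^3 * r' * m2
       - r^3 * r' * m^2 * v3 + 4 * r^3 * r' * q * d + 2 * r^3 * r' * q * m * v2
       - 3 * r^3 * r' * q^2 * v3 - 2 * r^3 * r' * p * b - r^3 * r'^3 * v3 - r^4 * q2 * d
       + 4 * r^4 * m * d^2 + 3 * r^4 * m^2 * d * v2 + r^4 * q * n2 + 2 * r^4 * q * a * b
       - 2 * r^4 * q * m * d * v3 + r^4 * q^2 * d * v2 + r^4 * r'^2 * d * v2 - r^5 * r' * d^2 * v3
       + r^6 * d^3 * v2
     else if k = 1 then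
       2 * r^2 * r' * p * m - r^3 * m * p2 + 3 * r^3 * m^2 * b + r^3 * m^3 * v1 + 3 * r^3 * q^2 * b
       + r^3 * q^2 * m * v1 + r^3 * p * m2 - r^3 * p * m^2 * v3 + 2 * r^3 * p * q * d
       + 2 * r^3 * p * q * m * v2 - 3 * r^3 * p * q^2 * v3 - r^3 * p^2 * b + 3 * r^3 * r'^2 * b
       + r^3 * r'^2 * m * v1 - 3 * r^3 * r'^2 * p * v3 - r^4 * r'' * b + r^4 * r' * n1
       - 2 * r^4 * r' * a * d - 2 * r^4 * r' * m * b * v3 + 2 * r^4 * r' * q * d * v1
       + 2 * r^4 * r' * q * b * v2 + 2 * r^4 * r' * p * d * v2 + 6 * r^5 * b * d^2
       + 3 * r^5 * m * d^2 * v1 + 6 * r^5 * m * b * d * v2 - 2 * r^5 * q * b * d * v3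
       - r^5 * p * d^2 * v3
     else if k = 2 then
       - 6 * r^3 * r' * q * d - 2 * r^3 * r' * q * m * v2 + 3 * r^3 * r' * q^2 * v3
       + 6 * r^3 * r' * p * b + 2 * r^3 * r' * p * m * v1 - 3 * r^3 * r' * p^2 * v3 + r^4 * q2 * d
       - r^4 * p2 * b - 4 * r^4 * m * d^2 + 4 * r^4 * m * b^2 - 3 * r^4 * m^2 * d * v2
       + 3 * r^4 * m^2 * b * v1 - r^4 * q * n2 - 2 * r^4 * q * a * b + 2 * r^4 * q * m * d * v3
       - 2 * r^4 * q^2 * d * v2 + r^4 * q^2 * b * v1 + r^4 * p * n1 - 2 * r^4 * p * a * d
       - 2 * r^4 * p * m * b * v3 + 2 * r^4 * p * q * d * v1 + 2 * r^4 * p * q * b * v2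
       + r^4 * p^2 * d * v2 - r^4 * r'^2 * d * v2 + r^4 * r'^2 * b * v1 + r^5 * r' * d^2 * v3
       - r^5 * r' * b^2 * v3 - 2 * r^6 * d^3 * v2 + 3 * r^6 * b * d^2 * v1 + 3 * r^6 * b^2 * d * v2
     else if k = 3 then
       - 2 * r^3 * q^2 * b - r^3 * q^2 * m * v1 - 4 * r^3 * p * q * d - 2 * r^3 * p * q * m * v2
       + 3 * r^3 * p * q^2 * v3 + 2 * r^3 * p^2 * b + r^3 * p^2 * m * v1 - r^3 * p^3 * v3
       - 2 * r^4 * r' * q * d * v1 - 2 * r^4 * r' * q * b * v2 - 2 * r^4 * r' * p * d * v2
       + 2 * r^4 * r' * p * b * v1 - 6 * r^5 * b * d^2 + 2 * r^5 * b^3 - 3 * r^5 * m * d^2 * v1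
       - 6 * r^5 * m * b * d * v2 + 3 * r^5 * m * b^2 * v1 + 2 * r^5 * q * b * d * v3
       + r^5 * p * d^2 * v3 - r^5 * p * b^2 * v3
     else if k = 4 then
       r^4 * q^2 * d * v2 - r^4 * q^2 * b * v1 - 2 * r^4 * p * q * d * v1 - 2 * r^4 * p * q * b * v2
       - r^4 * p^2 * d * v2 + r^4 * p^2 * b * v1 + r^6 * d^3 * v2 - 3 * r^6 * b * d^2 * v1
       - 3 * r^6 * b^2 * d * v2 + r^6 * b^3 * v1
     else 0)"

definition phi_coeff_sin ::
  "real \<Rightarrow> real \<Rightarrow> real \<Rightarrow> real \<Rightarrow> real \<Rightarrow> real \<Rightarrow> real \<Rightarrow> real \<Rightarrow> real \<Rightarrow>
    real \<Rightarrow> real \<Rightarrow> real \<Rightarrow> real \<Rightarrow> real \<Rightarrow> real \<Rightarrow> real \<Rightarrow> real \<Rightarrow> nat \<Rightarrow> real"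
  where "phi_coeff_sin r r' r'' p q m p2 q2 m2 a b d n1 n2 v1 v2 v3 k =
    (if k = 0 then
       2 * r^2 * r' * q * m - r^3 * m * q2 + 3 * r^3 * m^2 * d + r^3 * m^3 * v2 + r^3 * q * m2
       - r^3 * q * m^2 * v3 + r^3 * q^2 * d + r^3 * q^2 * m * v2 - r^3 * q^3 * v3
       - 2 * r^3 * p * q * b + r^3 * p^2 * d + 3 * r^3 * r'^2 * d + r^3 * r'^2 * m * v2
       - 3 * r^3 * r'^2 * q * v3 - r^4 * r'' * d + r^4 * r' * n2 + 2 * r^4 * r' * a * b
       - 2 * r^4 * r' * m * d * v3 + 2 * r^4 * r' * q * d * v2 + 2 * r^5 * d^3
       + 3 * r^5 * m * d^2 * v2 - r^5 * q * d^2 * v3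
     else if k = 1 then
       6 * r^3 * r' * q * b + 2 * r^3 * r' * q * m * v1 + 6 * r^3 * r' * p * d
       + 2 * r^3 * r' * p * m * v2 - 6 * r^3 * r' * p * q * v3 - r^4 * q2 * b - r^4 * p2 * d
       + 8 * r^4 * m * b * d + 3 * r^4 * m^2 * d * v1 + 3 * r^4 * m^2 * b * v2 + r^4 * q * n1
       - 2 * r^4 * q * a * d - 2 * r^4 * q * m * b * v3 + r^4 * q^2 * d * v1 + r^4 * q^2 * b * v2
       + r^4 * p * n2 + 2 * r^4 * p * a * b - 2 * r^4 * p * m * d * v3 + 2 * r^4 * p * q * d * v2
       + r^4 * r'^2 * d * v1 + r^4 * r'^2 * b * v2 - 2 * r^5 * r' * b * d * v3 + r^6 * d^3 * v1
       + 3 * r^6 * b * d^2 * v2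
     else if k = 2 then
       - 2 * r^3 * q^2 * d - r^3 * q^2 * m * v2 + r^3 * q^3 * v3 + 4 * r^3 * p * q * b
       + 2 * r^3 * p * q * m * v1 + 2 * r^3 * p^2 * d + r^3 * p^2 * m * v2 - 3 * r^3 * p^2 * q * v3
       - 2 * r^4 * r' * q * d * v2 + 2 * r^4 * r' * q * b * v1 + 2 * r^4 * r' * p * d * v1
       + 2 * r^4 * r' * p * b * v2 - 2 * r^5 * d^3 + 6 * r^5 * b^2 * d - 3 * r^5 * m * d^2 * v2
       + 6 * r^5 * m * b * d * v1 + 3 * r^5 * m * b^2 * v2 + r^5 * q * d^2 * v3 - r^5 * q * b^2 * v3
       - 2 * r^5 * p * b * d * v3
     else if k = 3 then
       0 - r^4 * q^2 * d * v1 - r^4 * q^2 * b * v2 - 2 * r^4 * p * q * d * v2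
       + 2 * r^4 * p * q * b * v1 + r^4 * p^2 * d * v1 + r^4 * p^2 * b * v2 - r^6 * d^3 * v1
       - 3 * r^6 * b * d^2 * v2 + 3 * r^6 * b^2 * d * v1 + r^6 * b^3 * v2
     else 0)"

lemma phi_mean_curv_numerator_trig_expansion:
  fixes r r' r'' p q m p2 q2 m2 a b d y n1 n2 v1 v2 v3 c s :: real
  assumes "c\<^sup>2 + s\<^sup>2 = 1"
    and "Xu = vector [p + r' * c - r * a * s, q + r' * s + r * a * c, m + r * (b * c + d * s)]"
    and "Xv = vector [- r * s, r * c, 0]"
    and "Xuu = vector [p2 + r'' * c - 2 * r' * a * s + r * (y * s - (a\<^sup>2 + b\<^sup>2) * c),
                       q2 + r'' * s + 2 * r' * a * c - r * ((2 * b * d + y) * c + (a\<^sup>2 + d\<^sup>2) * s),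
                       m2 + 2 * r' * (b * c + d * s) + r * (n1 * c + n2 * s)]"
    and "Xuv = vector [- r' * s - r * a * c, r' * c - r * a * s, r * (d * c - b * s)]"
    and "Xvv = vector [- r * c, - r * s, 0]"
  shows "phi_mean_curv_numerator Xu Xv Xuu Xuv Xvv (vector [v1, v2, v3])
    = (\<Sum>k\<le>4. (phi_coeff_cos r r' r'' p q m p2 q2 m2 a b d n1 n2 v1 v2 v3 k
                + phi_coeff_sin r r' r'' p q m p2 q2 m2 a b d n1 n2 v1 v2 v3 k * s) * c ^ k)"
  using assms(1)
  by (simp add: assms(2-) phi_mean_curv_numerator_def vector3_cross vector3_inner phi_coeff_cos_def
      phi_coeff_sin_def numeral_eq_Suc atMost_Suc del: vector_3) algebra

text \<open>In complex notation \<open>A\<^sub>4 + i B\<^sub>3 = r\<^sup>4 ((p + iq)\<^sup>2 + r\<^sup>2 (b + id)\<^sup>2) (b + id) (v1 + i v2)\<close>.\<close>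

lemma phi_coeffs_deg4_eq_0D:
  fixes r r' r'' p q m p2 q2 m2 a b d n1 n2 v1 v2 v3 :: real
  assumes A4: "phi_coeff_cos r r' r'' p q m p2 q2 m2 a b d n1 n2 v1 v2 v3 4 = 0"
    and B3: "phi_coeff_sin r r' r'' p q m p2 q2 m2 a b d n1 n2 v1 v2 v3 3 = 0"
    and "r > 0" and bd: "b\<^sup>2 + d\<^sup>2 > 0" and v: "v1\<^sup>2 + v2\<^sup>2 > 0"
  shows "p * b + q * d = 0 \<and> p\<^sup>2 + q\<^sup>2 = r\<^sup>2 * (b\<^sup>2 + d\<^sup>2)"
proof -
  define Zr Zi where "Zr = p\<^sup>2 - q\<^sup>2 + r\<^sup>2 * (b\<^sup>2 - d\<^sup>2)" and "Zi = - 2 * p * q - 2 * r\<^sup>2 * b * d"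
  define X Y where "X = b * v1 - d * v2" and "Y = - (b * v2 + d * v1)"
  have "phi_coeff_cos r r' r'' p q m p2 q2 m2 a b d n1 n2 v1 v2 v3 4 = r ^ 4 * (Zr * X - Zi * Y)"
    by (simp add: phi_coeff_cos_def Zr_def Zi_def X_def Y_def) algebra
  then have U: "Zr * X - Zi * Y = 0"
    using A4 \<open>r > 0\<close> by simp
  have "phi_coeff_sin r r' r'' p q m p2 q2 m2 a b d n1 n2 v1 v2 v3 3 = - (r ^ 4 * (Zr * Y + Zi * X))"
    by (simp add: phi_coeff_sin_def Zr_def Zi_def X_def Y_def) algebra
  then have W: "Zr * Y + Zi * X = 0"
    using B3 \<open>r > 0\<close> by simp
  have "X\<^sup>2 + Y\<^sup>2 = (b\<^sup>2 + d\<^sup>2) * (v1\<^sup>2 + v2\<^sup>2)"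
    by (simp add: X_def Y_def) algebra
  then have XY: "X\<^sup>2 + Y\<^sup>2 > 0"
    using bd v by simp
  have "Zr * (X\<^sup>2 + Y\<^sup>2) = X * (Zr * X - Zi * Y) + Y * (Zr * Y + Zi * X)"
    and "Zi * (X\<^sup>2 + Y\<^sup>2) = X * (Zr * Y + Zi * X) - Y * (Zr * X - Zi * Y)"
    by algebra+
  then have "Zr = 0" "Zi = 0"
    using U W XY by auto
  define x y where "x = p * b + q * d" and "y = p * d - q * b"
  have "x * y = Zr * b * d + Zi * (b\<^sup>2 - d\<^sup>2) / 2"
    and squares: "x\<^sup>2 - y\<^sup>2 = Zr * (b\<^sup>2 - d\<^sup>2) - 2 * Zi * b * d - r\<^sup>2 * (b\<^sup>2 + d\<^sup>2)\<^sup>2"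
    by (simp_all add: x_def y_def Zr_def Zi_def) algebra+
  then have "x * y = 0" "x\<^sup>2 + r\<^sup>2 * (b\<^sup>2 + d\<^sup>2)\<^sup>2 = y\<^sup>2"
    using \<open>Zr = 0\<close> \<open>Zi = 0\<close> by simp_all
  then have "x = 0"
    using bd \<open>r > 0\<close> by (metis add_le_same_cancel1 mult_eq_0_iff not_less zero_le_power2
        power_zero_numeral zero_less_mult_iff zero_less_power2 less_irrefl)
  have "(p\<^sup>2 + q\<^sup>2) * (b\<^sup>2 + d\<^sup>2) = x\<^sup>2 + y\<^sup>2"
    by (simp add: x_def y_def) algebra
  also have "\<dots> = r\<^sup>2 * (b\<^sup>2 + d\<^sup>2) * (b\<^sup>2 + d\<^sup>2)"
    using squares \<open>x = 0\<close> \<open>Zr = 0\<close> \<open>Zi = 0\<close> by (simp add: power2_eq_square)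
  finally show ?thesis
    using \<open>x = 0\<close> bd by (auto simp: x_def)
qed

lemma orthogonal_pair_eq_rotated:
  fixes r p q b d :: real
  assumes "r > 0" and bd: "b\<^sup>2 + d\<^sup>2 > 0"
    and orth: "p * b + q * d = 0" and len: "p\<^sup>2 + q\<^sup>2 = r\<^sup>2 * (b\<^sup>2 + d\<^sup>2)"
  obtains e where "e\<^sup>2 = 1" "p = e * r * d" "q = - e * r * b"
proof
  define K where "K = r * (b\<^sup>2 + d\<^sup>2)"
  define y where "y = p * d - q * b"
  define e where "e = y / K"
  have "K > 0"
    using \<open>r > 0\<close> bd by (simp add: K_def)
  then have eK: "e * K = y"
    by (simp add: e_def)
  have "y\<^sup>2 = (p\<^sup>2 + q\<^sup>2) * (b\<^sup>2 + d\<^sup>2) - (p * b + q * d)\<^sup>2"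
    by (simp add: y_def) algebra
  also have "\<dots> = 1 * K\<^sup>2"
    using orth len by (simp add: K_def power2_eq_square)
  finally show "e\<^sup>2 = 1"
    using \<open>K > 0\<close> eK by (metis power_mult_distrib mult_right_cancel zero_less_power less_irrefl)
  have "p * (b\<^sup>2 + d\<^sup>2) = (p * b + q * d) * b + y * d"
    and "q * (b\<^sup>2 + d\<^sup>2) = (p * b + q * d) * d - y * b"
    by (simp_all add: y_def) algebra+
  then have "p * K = (e * r * d) * K" "q * K = (- e * r * b) * K"
    using orth eK unfolding K_def by algebra+
  then show "p = e * r * d" "q = - e * r * b"
    using \<open>K > 0\<close> by (metis less_irrefl mult_right_cancel)+
qed

text \<open>In complex notation \<open>A\<^sub>3 + i B\<^sub>2 = 2 r\<^sup>5 (m - i e r') (b + id)\<^sup>2 (v1 + i v2)\<close>.\<close>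

lemma phi_coeffs_deg3_eq_0D:
  fixes r r' r'' p q m p2 q2 m2 a b d n1 n2 v1 v2 v3 e :: real
  assumes A3: "phi_coeff_cos r r' r'' p q m p2 q2 m2 a b d n1 n2 v1 v2 v3 3 = 0"
    and B2: "phi_coeff_sin r r' r'' p q m p2 q2 m2 a b d n1 n2 v1 v2 v3 2 = 0"
    and "r > 0" and bd: "b\<^sup>2 + d\<^sup>2 > 0" and v: "v1\<^sup>2 + v2\<^sup>2 > 0"
    and e: "e\<^sup>2 = 1" "p = e * r * d" "q = - e * r * b"
  shows "m = 0 \<and> r' = 0"
proof -
  define G1 G2 where "G1 = (b\<^sup>2 - d\<^sup>2) * v1 - 2 * b * d * v2" and "G2 = (b\<^sup>2 - d\<^sup>2) * v2 + 2 * b * d * v1"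
  have "phi_coeff_cos r r' r'' p q m p2 q2 m2 a b d n1 n2 v1 v2 v3 3 = 2 * r ^ 5 * (m * G1 + e * r' * G2)"
    and "phi_coeff_sin r r' r'' p q m p2 q2 m2 a b d n1 n2 v1 v2 v3 2 = 2 * r ^ 5 * (m * G2 - e * r' * G1)"
    using e(1) by (simp_all add: phi_coeff_cos_def phi_coeff_sin_def G1_def G2_def e(2,3)) algebra+
  then have U: "m * G1 + e * r' * G2 = 0" and W: "m * G2 - e * r' * G1 = 0"
    using A3 B2 \<open>r > 0\<close> by simp_all
  have "G1\<^sup>2 + G2\<^sup>2 = (b\<^sup>2 + d\<^sup>2)\<^sup>2 * (v1\<^sup>2 + v2\<^sup>2)"
    by (simp add: G1_def G2_def) algebra
  then have G: "G1\<^sup>2 + G2\<^sup>2 > 0"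
    using bd v by (metis mult_pos_pos zero_less_power)
  have "m * (G1\<^sup>2 + G2\<^sup>2) = G1 * (m * G1 + e * r' * G2) + G2 * (m * G2 - e * r' * G1)"
    and "e * r' * (G1\<^sup>2 + G2\<^sup>2) = G2 * (m * G1 + e * r' * G2) - G1 * (m * G2 - e * r' * G1)"
    by algebra+
  then show ?thesis
    using U W G e(1) by auto
qed

text \<open>
  \<open>F1\<close> and \<open>F2\<close> are the derivatives of the two relations of \<open>phi_coeffs_deg4_eq_0D\<close>. Once
  \<open>p, q, m, r'\<close> are as found above, \<open>(b\<^sup>2 + d\<^sup>2) (A\<^sub>2 + i B\<^sub>1)\<close> is
  \<open>r\<^sup>6 (b\<^sup>2 + d\<^sup>2)\<^sup>2 (b + id) (v1 + i v2)\<close> plus a combination of \<open>F1\<close> and \<open>F2\<close>.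
\<close>

lemma phi_coeffs_deg2_eq_0D:
  fixes r r' r'' p q m p2 q2 m2 a b d n1 n2 v1 v2 v3 e :: real
  assumes A2: "phi_coeff_cos r r' r'' p q m p2 q2 m2 a b d n1 n2 v1 v2 v3 2 = 0"
    and B1: "phi_coeff_sin r r' r'' p q m p2 q2 m2 a b d n1 n2 v1 v2 v3 1 = 0"
    and "r > 0" and bd: "b\<^sup>2 + d\<^sup>2 > 0"
    and e: "e\<^sup>2 = 1" "p = e * r * d" "q = - e * r * b" and "m = 0" "r' = 0"
    and F1: "(p2 + a * q + b * m) * b + p * (n1 - a * d) + (q2 - a * p + d * m) * d + q * (n2 + a * b) = 0"
    and F2: "2 * p * (p2 + a * q + b * m) + 2 * q * (q2 - a * p + d * m) - 2 * r * r' * (b\<^sup>2 + d\<^sup>2)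
             - r\<^sup>2 * (2 * b * (n1 - a * d) + 2 * d * (n2 + a * b)) = 0"
  shows "v1 = 0 \<and> v2 = 0"
proof -
  define F1v where "F1v = (p2 + a * q + b * m) * b + p * (n1 - a * d) + (q2 - a * p + d * m) * d + q * (n2 + a * b)"
  define F2v where "F2v = 2 * p * (p2 + a * q + b * m) + 2 * q * (q2 - a * p + d * m) - 2 * r * r' * (b\<^sup>2 + d\<^sup>2)
             - r\<^sup>2 * (2 * b * (n1 - a * d) + 2 * d * (n2 + a * b))"
  define K where "K = r ^ 6 * (b\<^sup>2 + d\<^sup>2)\<^sup>2"
  have "K > 0"
    using \<open>r > 0\<close> bd unfolding K_def by (metis mult_pos_pos zero_less_power)
  have "(b\<^sup>2 + d\<^sup>2) * phi_coeff_cos r r' r'' p q m p2 q2 m2 a b d n1 n2 v1 v2 v3 2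
          = r ^ 4 * (d\<^sup>2 - b\<^sup>2) * F1v - e * r ^ 3 * b * d * F2v + K * (b * v1 - d * v2)"
    and "(b\<^sup>2 + d\<^sup>2) * phi_coeff_sin r r' r'' p q m p2 q2 m2 a b d n1 n2 v1 v2 v3 1
          = - 2 * b * d * r ^ 4 * F1v + e * r ^ 3 * (b\<^sup>2 - d\<^sup>2) / 2 * F2v + K * (d * v1 + b * v2)"
    using e(1) by (simp_all add: phi_coeff_cos_def phi_coeff_sin_def F1v_def F2v_def K_def e(2,3)
        \<open>m = 0\<close> \<open>r' = 0\<close>) algebra+
  then have X: "b * v1 - d * v2 = 0" and Y: "d * v1 + b * v2 = 0"
    using A2 B1 F1 F2 \<open>K > 0\<close> by (simp_all flip: F1v_def F2v_def)
  have "(b\<^sup>2 + d\<^sup>2) * v1 = b * (b * v1 - d * v2) + d * (d * v1 + b * v2)"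
    and "(b\<^sup>2 + d\<^sup>2) * v2 = b * (d * v1 + b * v2) - d * (b * v1 - d * v2)"
    by algebra+
  then show ?thesis
    using X Y bd by auto
qed

section \<open>Cyclic surfaces in the frame of their circles\<close>

locale cyclic_frame =
  fixes c c' c'' e1 e1' e1'' e2 e2' e2'' :: "real \<Rightarrow> real^3"
    and r r' r'' :: "real \<Rightarrow> real" and I :: "real set"
  assumes open_I: "open I"
    and deriv_c: "\<And>s. s \<in> I \<Longrightarrow> (c has_vector_derivative c' s) (at s)"
    and deriv_c': "\<And>s. s \<in> I \<Longrightarrow> (c' has_vector_derivative c'' s) (at s)"
    and deriv_r: "\<And>s. s \<in> I \<Longrightarrow> (r has_real_derivative r' s) (at s)"
    and deriv_r': "\<And>s. s \<in> I \<Longrightarrow> (r' has_real_derivative r'' s) (at s)"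
    and deriv_e1: "\<And>s. s \<in> I \<Longrightarrow> (e1 has_vector_derivative e1' s) (at s)"
    and deriv_e1': "\<And>s. s \<in> I \<Longrightarrow> (e1' has_vector_derivative e1'' s) (at s)"
    and deriv_e2: "\<And>s. s \<in> I \<Longrightarrow> (e2 has_vector_derivative e2' s) (at s)"
    and deriv_e2': "\<And>s. s \<in> I \<Longrightarrow> (e2' has_vector_derivative e2'' s) (at s)"
    and radius_pos: "\<And>s. s \<in> I \<Longrightarrow> r s > 0"
    and orthonormal: "\<And>s. s \<in> I \<Longrightarrow> orthonormal_pair (e1 s) (e2 s)"
begin

abbreviation X :: "real \<Rightarrow> real \<Rightarrow> real^3" where
  "X \<equiv> cyclic_param c r e1 e2"

abbreviation frame :: "real \<Rightarrow> real^3 \<Rightarrow> real^3" where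
  "frame s \<equiv> frame_coords (e1 s) (e2 s)"

definition plane_normal :: "real \<Rightarrow> real^3" where
  "plane_normal s = cross3 (e1 s) (e2 s)"

definition twist :: "real \<Rightarrow> real" where
  "twist s = e2 s \<bullet> e1' s"

definition tilt1 :: "real \<Rightarrow> real" where
  "tilt1 s = plane_normal s \<bullet> e1' s"

definition tilt2 :: "real \<Rightarrow> real" where
  "tilt2 s = plane_normal s \<bullet> e2' s"

lemma inner_deriv_eq_0_if_const:
  assumes "s \<in> I" "\<And>\<sigma>. \<sigma> \<in> I \<Longrightarrow> f \<sigma> \<bullet> g \<sigma> = k"
    and "(f has_vector_derivative f') (at s)" "(g has_vector_derivative g') (at s)"
  shows "f s \<bullet> g' + f' \<bullet> g s = 0"
  using has_real_derivative_const_on_open_eq_0[OF open_I assms(1,2) has_real_derivative_inner[OF assms(3,4)]] .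

lemma frame_orthonormality:
  assumes "s \<in> I"
  shows "e1 s \<bullet> e1 s = 1" "e2 s \<bullet> e2 s = 1" "e1 s \<bullet> e2 s = 0"
    and "e1 s \<bullet> e1' s = 0" "e2 s \<bullet> e2' s = 0" "e1 s \<bullet> e2' s + e1' s \<bullet> e2 s = 0"
    and "e1 s \<bullet> e1'' s + e1' s \<bullet> e1' s = 0" "e2 s \<bullet> e2'' s + e2' s \<bullet> e2' s = 0"
    and "e1 s \<bullet> e2'' s + 2 * (e1' s \<bullet> e2' s) + e1'' s \<bullet> e2 s = 0"
proof -
  have unit: "e1 \<sigma> \<bullet> e1 \<sigma> = 1" "e2 \<sigma> \<bullet> e2 \<sigma> = 1" "e1 \<sigma> \<bullet> e2 \<sigma> = 0" if "\<sigma> \<in> I" for \<sigma>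
    using orthonormal[OF that] by (simp_all add: orthonormal_pair_def dot_square_norm)
  then show "e1 s \<bullet> e1 s = 1" "e2 s \<bullet> e2 s = 1" "e1 s \<bullet> e2 s = 0"
    using assms by simp_all
  have first: "e1 \<sigma> \<bullet> e1' \<sigma> = 0" "e2 \<sigma> \<bullet> e2' \<sigma> = 0" "e1 \<sigma> \<bullet> e2' \<sigma> + e1' \<sigma> \<bullet> e2 \<sigma> = 0"
    if "\<sigma> \<in> I" for \<sigma>
    using inner_deriv_eq_0_if_const[OF that unit(1) deriv_e1[OF that] deriv_e1[OF that]]
      inner_deriv_eq_0_if_const[OF that unit(2) deriv_e2[OF that] deriv_e2[OF that]]
      inner_deriv_eq_0_if_const[OF that unit(3) deriv_e1[OF that] deriv_e2[OF that]]
    by (simp_all add: inner_commute)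
  then show "e1 s \<bullet> e1' s = 0" "e2 s \<bullet> e2' s = 0" "e1 s \<bullet> e2' s + e1' s \<bullet> e2 s = 0"
    using assms by simp_all
  show "e1 s \<bullet> e1'' s + e1' s \<bullet> e1' s = 0" "e2 s \<bullet> e2'' s + e2' s \<bullet> e2' s = 0"
    using inner_deriv_eq_0_if_const[OF assms first(1) deriv_e1[OF assms] deriv_e1'[OF assms]]
      inner_deriv_eq_0_if_const[OF assms first(2) deriv_e2[OF assms] deriv_e2'[OF assms]]
    by simp_all
  have "((\<lambda>\<sigma>. e1 \<sigma> \<bullet> e2' \<sigma> + e1' \<sigma> \<bullet> e2 \<sigma>) has_real_derivative
          (e1 s \<bullet> e2'' s + e1' s \<bullet> e2' s) + (e1' s \<bullet> e2' s + e1'' s \<bullet> e2 s)) (at s)"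
    using assms by (intro DERIV_add has_real_derivative_inner deriv_e1 deriv_e1' deriv_e2 deriv_e2')
  from has_real_derivative_const_on_open_eq_0[OF open_I assms first(3) this]
  show "e1 s \<bullet> e2'' s + 2 * (e1' s \<bullet> e2' s) + e1'' s \<bullet> e2 s = 0"
    by simp
qed

lemma frame_coords_frame_derivatives:
  assumes "s \<in> I"
  shows "frame s (e1' s) = vector [0, twist s, tilt1 s]"
    and "frame s (e2' s) = vector [- twist s, 0, tilt2 s]"
    and "frame s (e1'' s) = vector [- (twist s ^ 2 + tilt1 s ^ 2),
                                    - 2 * tilt1 s * tilt2 s - e1 s \<bullet> e2'' s, plane_normal s \<bullet> e1'' s]"
    and "frame s (e2'' s) = vector [e1 s \<bullet> e2'' s, - (twist s ^ 2 + tilt2 s ^ 2), plane_normal s \<bullet> e2'' s]"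
proof -
  note rel = frame_orthonormality[OF assms]
  show e1': "frame s (e1' s) = vector [0, twist s, tilt1 s]"
    using rel by (simp add: frame_coords_def twist_def tilt1_def plane_normal_def)
  show e2': "frame s (e2' s) = vector [- twist s, 0, tilt2 s]"
    using rel by (simp add: frame_coords_def twist_def tilt2_def plane_normal_def inner_commute
        eq_neg_iff_add_eq_0)
  have "e1' s \<bullet> e1' s = twist s ^ 2 + tilt1 s ^ 2" "e2' s \<bullet> e2' s = twist s ^ 2 + tilt2 s ^ 2"
    "e1' s \<bullet> e2' s = tilt1 s * tilt2 s"
    using frame_coords_inner[OF orthonormal[OF assms], of "e1' s" "e1' s"]
      frame_coords_inner[OF orthonormal[OF assms], of "e2' s" "e2' s"]
      frame_coords_inner[OF orthonormal[OF assms], of "e1' s" "e2' s"]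
    unfolding e1' e2' vector3_inner by (simp_all add: power2_eq_square)
  with rel show "frame s (e1'' s) = vector [- (twist s ^ 2 + tilt1 s ^ 2),
                                    - 2 * tilt1 s * tilt2 s - e1 s \<bullet> e2'' s, plane_normal s \<bullet> e1'' s]"
    and "frame s (e2'' s) = vector [e1 s \<bullet> e2'' s, - (twist s ^ 2 + tilt2 s ^ 2), plane_normal s \<bullet> e2'' s]"
    by (simp_all add: frame_coords_def plane_normal_def inner_commute algebra_simps eq_neg_iff_add_eq_0)
qed

lemma frenet_equations:
  assumes "s \<in> I"
  shows "e1' s = twist s *\<^sub>R e2 s + tilt1 s *\<^sub>R plane_normal s"
    and "e2' s = - twist s *\<^sub>R e1 s + tilt2 s *\<^sub>R plane_normal s"
proof -
  note on = orthonormal[OF assms]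
  have "frame s (e1' s) = frame s (twist s *\<^sub>R e2 s + tilt1 s *\<^sub>R plane_normal s)"
    and "frame s (e2' s) = frame s (- twist s *\<^sub>R e1 s + tilt2 s *\<^sub>R plane_normal s)"
    using frame_coords_frame_derivatives(1,2)[OF assms] frame_coords_basis[OF on]
    by (simp_all add: plane_normal_def)
  then show "e1' s = twist s *\<^sub>R e2 s + tilt1 s *\<^sub>R plane_normal s"
    and "e2' s = - twist s *\<^sub>R e1 s + tilt2 s *\<^sub>R plane_normal s"
    by (simp_all only: frame_coords_inject[OF on])
qed

lemma has_vector_derivative_plane_normal:
  assumes "s \<in> I"
  shows "(plane_normal has_vector_derivative - tilt1 s *\<^sub>R e1 s - tilt2 s *\<^sub>R e2 s) (at s)"
proof -
  note on = orthonormal[OF assms]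
  have "frame s (cross3 (e1 s) (e2' s) + cross3 (e1' s) (e2 s)) = frame s (- tilt1 s *\<^sub>R e1 s - tilt2 s *\<^sub>R e2 s)"
    using frame_coords_frame_derivatives(1,2)[OF assms] frame_coords_basis[OF on]
    by (simp add: frame_coords_cross[OF on] vector3_cross)
  then have "cross3 (e1 s) (e2' s) + cross3 (e1' s) (e2 s) = - tilt1 s *\<^sub>R e1 s - tilt2 s *\<^sub>R e2 s"
    by (simp only: frame_coords_inject[OF on])
  then show ?thesis
    using has_vector_derivative_cross3[OF deriv_e1[OF assms] deriv_e2[OF assms]]
    by (simp add: plane_normal_def[abs_def])
qed

lemma has_real_derivative_frame_inner:
  assumes "s \<in> I" "(w has_vector_derivative w') (at s)"
  shows "((\<lambda>\<sigma>. e1 \<sigma> \<bullet> w \<sigma>) has_real_derivative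
           e1 s \<bullet> w' + twist s * (e2 s \<bullet> w s) + tilt1 s * (plane_normal s \<bullet> w s)) (at s)"
    and "((\<lambda>\<sigma>. e2 \<sigma> \<bullet> w \<sigma>) has_real_derivative
           e2 s \<bullet> w' - twist s * (e1 s \<bullet> w s) + tilt2 s * (plane_normal s \<bullet> w s)) (at s)"
    and "((\<lambda>\<sigma>. plane_normal \<sigma> \<bullet> w \<sigma>) has_real_derivative
           plane_normal s \<bullet> w' - tilt1 s * (e1 s \<bullet> w s) - tilt2 s * (e2 s \<bullet> w s)) (at s)"
  using has_real_derivative_inner[OF deriv_e1[OF assms(1)] assms(2)]
    has_real_derivative_inner[OF deriv_e2[OF assms(1)] assms(2)]
    has_real_derivative_inner[OF has_vector_derivative_plane_normal[OF assms(1)] assms(2)]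
  by (simp_all add: frenet_equations[OF assms(1)] inner_add_left inner_diff_left algebra_simps)

lemma has_real_derivative_tilts:
  assumes "s \<in> I"
  shows "(tilt1 has_real_derivative plane_normal s \<bullet> e1'' s - twist s * tilt2 s) (at s)"
    and "(tilt2 has_real_derivative plane_normal s \<bullet> e2'' s + twist s * tilt1 s) (at s)"
proof -
  have "e1 s \<bullet> e1' s = 0" "e2 s \<bullet> e2' s = 0" "e1 s \<bullet> e2' s = - twist s"
    using frame_orthonormality[OF assms] by (simp_all add: twist_def inner_commute eq_neg_iff_add_eq_0)
  then show "(tilt1 has_real_derivative plane_normal s \<bullet> e1'' s - twist s * tilt2 s) (at s)"
    and "(tilt2 has_real_derivative plane_normal s \<bullet> e2'' s + twist s * tilt1 s) (at s)"
    by (auto intro!: DERIV_cong[OF has_real_derivative_frame_inner(3)[OF assms deriv_e1'[OF assms],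
            folded tilt1_def[abs_def]]]
          DERIV_cong[OF has_real_derivative_frame_inner(3)[OF assms deriv_e2'[OF assms],
            folded tilt2_def[abs_def]]]
        simp: twist_def tilt1_def tilt2_def inner_commute)
qed

lemma cyclic_param_trig_comb: "X s t = c s + cos t *\<^sub>R (r s *\<^sub>R e1 s) + sin t *\<^sub>R (r s *\<^sub>R e2 s)"
  by (simp add: cyclic_param_def algebra_simps)

lemma Xt_cyclic_param: "Xt X s t = cos t *\<^sub>R (r s *\<^sub>R e2 s) - sin t *\<^sub>R (r s *\<^sub>R e1 s)"
  unfolding Xt_def cyclic_param_trig_comb by (rule vector_derivative_at[OF has_vector_derivative_trig_comb])

lemma Xtt_cyclic_param: "Xt (Xt X) s t = - cos t *\<^sub>R (r s *\<^sub>R e1 s) - sin t *\<^sub>R (r s *\<^sub>R e2 s)"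
proof -
  have eq: "(\<lambda>\<tau>. Xt X s \<tau>) = (\<lambda>\<tau>. 0 + cos \<tau> *\<^sub>R (r s *\<^sub>R e2 s) + sin \<tau> *\<^sub>R (- (r s *\<^sub>R e1 s)))"
    by (simp add: Xt_cyclic_param)
  show ?thesis
    unfolding Xt_def[of "Xt X"] eq vector_derivative_at[OF has_vector_derivative_trig_comb] by simp
qed

lemma Xs_cyclic_param:
  assumes "s \<in> I"
  shows "Xs X s t = c' s + cos t *\<^sub>R (r s *\<^sub>R e1' s + r' s *\<^sub>R e1 s) + sin t *\<^sub>R (r s *\<^sub>R e2' s + r' s *\<^sub>R e2 s)"
  unfolding Xs_def cyclic_param_trig_comb
  by (intro vector_derivative_at has_vector_derivative_trig_comb_coeffs has_vector_derivative_scaleR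
      deriv_c deriv_r deriv_e1 deriv_e2 assms)

lemma Xst_cyclic_param:
  assumes "s \<in> I"
  shows "Xt (Xs X) s t = cos t *\<^sub>R (r s *\<^sub>R e2' s + r' s *\<^sub>R e2 s) - sin t *\<^sub>R (r s *\<^sub>R e1' s + r' s *\<^sub>R e1 s)"
  unfolding Xt_def Xs_cyclic_param[OF assms]
  by (rule vector_derivative_at[OF has_vector_derivative_trig_comb])

lemma Xss_cyclic_param:
  assumes "s \<in> I"
  shows "Xs (Xs X) s t = c'' s
           + cos t *\<^sub>R (r s *\<^sub>R e1'' s + (2 * r' s) *\<^sub>R e1' s + r'' s *\<^sub>R e1 s)
           + sin t *\<^sub>R (r s *\<^sub>R e2'' s + (2 * r' s) *\<^sub>R e2' s + r'' s *\<^sub>R e2 s)"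
proof -
  have "((\<lambda>\<sigma>. c' \<sigma> + cos t *\<^sub>R (r \<sigma> *\<^sub>R e1' \<sigma> + r' \<sigma> *\<^sub>R e1 \<sigma>) + sin t *\<^sub>R (r \<sigma> *\<^sub>R e2' \<sigma> + r' \<sigma> *\<^sub>R e2 \<sigma>))
          has_vector_derivative c'' s
           + cos t *\<^sub>R ((r s *\<^sub>R e1'' s + r' s *\<^sub>R e1' s) + (r' s *\<^sub>R e1' s + r'' s *\<^sub>R e1 s))
           + sin t *\<^sub>R ((r s *\<^sub>R e2'' s + r' s *\<^sub>R e2' s) + (r' s *\<^sub>R e2' s + r'' s *\<^sub>R e2 s))) (at s)"
    by (intro has_vector_derivative_trig_comb_coeffs has_vector_derivative_add has_vector_derivative_scaleR
        deriv_c' deriv_r deriv_r' deriv_e1 deriv_e1' deriv_e2 deriv_e2' assms)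
  then have "((\<lambda>\<sigma>. Xs X \<sigma> t) has_vector_derivative c'' s
           + cos t *\<^sub>R ((r s *\<^sub>R e1'' s + r' s *\<^sub>R e1' s) + (r' s *\<^sub>R e1' s + r'' s *\<^sub>R e1 s))
           + sin t *\<^sub>R ((r s *\<^sub>R e2'' s + r' s *\<^sub>R e2' s) + (r' s *\<^sub>R e2' s + r'' s *\<^sub>R e2 s))) (at s)"
    by (rule has_vector_derivative_transform_within_open[OF _ open_I assms]) (simp add: Xs_cyclic_param)
  moreover have "(x + k *\<^sub>R y) + (k *\<^sub>R y + z) = x + (2 * k) *\<^sub>R y + z" for x y z :: "real^3" and k
    by (simp add: algebra_simps flip: scaleR_2)
  ultimately show ?thesis
    unfolding Xs_def[of "Xs X"] by (simp only: vector_derivative_at)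
qed

abbreviation coeff_cos :: "real^3 \<Rightarrow> real \<Rightarrow> nat \<Rightarrow> real" where
  "coeff_cos v s \<equiv> phi_coeff_cos (r s) (r' s) (r'' s)
     (e1 s \<bullet> c' s) (e2 s \<bullet> c' s) (plane_normal s \<bullet> c' s) (e1 s \<bullet> c'' s) (e2 s \<bullet> c'' s) (plane_normal s \<bullet> c'' s)
     (twist s) (tilt1 s) (tilt2 s) (plane_normal s \<bullet> e1'' s) (plane_normal s \<bullet> e2'' s)
     (e1 s \<bullet> v) (e2 s \<bullet> v) (plane_normal s \<bullet> v)"

abbreviation coeff_sin :: "real^3 \<Rightarrow> real \<Rightarrow> nat \<Rightarrow> real" where
  "coeff_sin v s \<equiv> phi_coeff_sin (r s) (r' s) (r'' s)
     (e1 s \<bullet> c' s) (e2 s \<bullet> c' s) (plane_normal s \<bullet> c' s) (e1 s \<bullet> c'' s) (e2 s \<bullet> c'' s) (plane_normal s \<bullet> c'' s)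
     (twist s) (tilt1 s) (tilt2 s) (plane_normal s \<bullet> e1'' s) (plane_normal s \<bullet> e2'' s)
     (e1 s \<bullet> v) (e2 s \<bullet> v) (plane_normal s \<bullet> v)"

lemma phi_mean_curv_numerator_cyclic_param:
  assumes "s \<in> I"
  shows "phi_mean_curv_numerator (Xs X s t) (Xt X s t) (Xs (Xs X) s t) (Xt (Xs X) s t) (Xt (Xt X) s t) v
         = (\<Sum>k\<le>4. (coeff_cos v s k + coeff_sin v s k * sin t) * cos t ^ k)"
proof -
  note on = orthonormal[OF assms]
  have coords: "frame s x = vector [e1 s \<bullet> x, e2 s \<bullet> x, plane_normal s \<bullet> x]" for x
    by (simp add: frame_coords_def plane_normal_def)
  note frame_simps = frame_coords_basis[OF on] frame_coords_frame_derivatives[OF assms]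
    Xs_cyclic_param[OF assms] Xss_cyclic_param[OF assms] Xst_cyclic_param[OF assms]
    Xt_cyclic_param Xtt_cyclic_param coords[of "c' s"] coords[of "c'' s"]
  have "phi_mean_curv_numerator (Xs X s t) (Xt X s t) (Xs (Xs X) s t) (Xt (Xs X) s t) (Xt (Xt X) s t) v
      = phi_mean_curv_numerator (frame s (Xs X s t)) (frame s (Xt X s t)) (frame s (Xs (Xs X) s t))
          (frame s (Xt (Xs X) s t)) (frame s (Xt (Xt X) s t)) (frame s v)"
    by (rule phi_mean_curv_numerator_frame_coords[OF on, symmetric])
  also have "\<dots> = (\<Sum>k\<le>4. (coeff_cos v s k + coeff_sin v s k * sin t) * cos t ^ k)"
    unfolding coords[of v]
    by (rule phi_mean_curv_numerator_trig_expansion[where y = "e1 s \<bullet> e2'' s"])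
      (simp_all add: frame_simps, simp_all add: algebra_simps)
  finally show ?thesis .
qed

lemma has_real_derivative_tangency_relations:
  assumes "s \<in> I"
  defines "p \<equiv> e1 s \<bullet> c' s" and "q \<equiv> e2 s \<bullet> c' s" and "m \<equiv> plane_normal s \<bullet> c' s"
    and "p2 \<equiv> e1 s \<bullet> c'' s" and "q2 \<equiv> e2 s \<bullet> c'' s"
    and "a \<equiv> twist s" and "b \<equiv> tilt1 s" and "d \<equiv> tilt2 s"
    and "n1 \<equiv> plane_normal s \<bullet> e1'' s" and "n2 \<equiv> plane_normal s \<bullet> e2'' s"
  shows "((\<lambda>\<sigma>. (e1 \<sigma> \<bullet> c' \<sigma>) * tilt1 \<sigma> + (e2 \<sigma> \<bullet> c' \<sigma>) * tilt2 \<sigma>) has_real_derivative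
           (p2 + a * q + b * m) * b + p * (n1 - a * d) + (q2 - a * p + d * m) * d + q * (n2 + a * b)) (at s)"
      (is "(?F1 has_real_derivative ?G1) _")
    and "((\<lambda>\<sigma>. (e1 \<sigma> \<bullet> c' \<sigma>)\<^sup>2 + (e2 \<sigma> \<bullet> c' \<sigma>)\<^sup>2 - (r \<sigma>)\<^sup>2 * ((tilt1 \<sigma>)\<^sup>2 + (tilt2 \<sigma>)\<^sup>2))
           has_real_derivative 2 * p * (p2 + a * q + b * m) + 2 * q * (q2 - a * p + d * m)
             - 2 * r s * r' s * (b\<^sup>2 + d\<^sup>2) - (r s)\<^sup>2 * (2 * b * (n1 - a * d) + 2 * d * (n2 + a * b))) (at s)"
      (is "(?F2 has_real_derivative ?G2) _")
proof -
  note dp = has_real_derivative_frame_inner(1)[OF assms(1) deriv_c'[OF assms(1)]]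
  note dq = has_real_derivative_frame_inner(2)[OF assms(1) deriv_c'[OF assms(1)]]
  note db = has_real_derivative_tilts(1)[OF assms(1)]
  note dd = has_real_derivative_tilts(2)[OF assms(1)]
  note dr = deriv_r[OF assms(1)]
  show "(?F1 has_real_derivative ?G1) (at s)"
    by (rule DERIV_cong[OF DERIV_add[OF DERIV_mult[OF dp db] DERIV_mult[OF dq dd]]])
      (simp add: assms(2-) algebra_simps)
  show "(?F2 has_real_derivative ?G2) (at s)"
    by (rule DERIV_cong[OF DERIV_diff[OF DERIV_add[OF DERIV_power[OF dp] DERIV_power[OF dq]]
          DERIV_mult[OF DERIV_power[OF dr] DERIV_add[OF DERIV_power[OF db] DERIV_power[OF dd]]]]])
      (simp add: assms(2-) algebra_simps power2_eq_square)
qed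

lemma tilts_eq_0_if_normal_to_planes:
  assumes "v \<noteq> 0" "open U" "U \<subseteq> I" "s \<in> U"
    and normal: "\<And>\<sigma>. \<sigma> \<in> U \<Longrightarrow> e1 \<sigma> \<bullet> v = 0 \<and> e2 \<sigma> \<bullet> v = 0"
  shows "tilt1 s = 0 \<and> tilt2 s = 0"
proof -
  have "s \<in> I"
    using assms(3,4) by blast
  have "e1 s \<bullet> 0 + twist s * (e2 s \<bullet> v) + tilt1 s * (plane_normal s \<bullet> v) = 0"
    and "e2 s \<bullet> 0 - twist s * (e1 s \<bullet> v) + tilt2 s * (plane_normal s \<bullet> v) = 0"
    using has_real_derivative_const_on_open_eq_0[OF assms(2,4), of "\<lambda>\<sigma>. e1 \<sigma> \<bullet> v" 0]
      has_real_derivative_const_on_open_eq_0[OF assms(2,4), of "\<lambda>\<sigma>. e2 \<sigma> \<bullet> v" 0]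
      has_real_derivative_frame_inner(1,2)[OF \<open>s \<in> I\<close> has_vector_derivative_const]
      normal
    by blast+
  then have "tilt1 s * (plane_normal s \<bullet> v) = 0" "tilt2 s * (plane_normal s \<bullet> v) = 0"
    using normal[OF assms(4)] by simp_all
  moreover have "plane_normal s \<bullet> v \<noteq> 0"
  proof
    assume "plane_normal s \<bullet> v = 0"
    then have "frame s v = 0"
      using normal[OF assms(4)] by (simp add: frame_coords_def plane_normal_def)
    then show False
      using \<open>v \<noteq> 0\<close> frame_coords_inject[OF orthonormal[OF \<open>s \<in> I\<close>], of v 0] by simp
  qed
  ultimately show ?thesis
    by simp
qed

lemma plane_normal_const_if_tilts_eq_0:
  assumes "is_interval I" and tilts: "\<And>s. s \<in> I \<Longrightarrow> tilt1 s = 0 \<and> tilt2 s = 0"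
    and "s1 \<in> I" "s2 \<in> I"
  shows "plane_normal s1 = plane_normal s2"
proof -
  have "(plane_normal has_vector_derivative 0) (at s within I)" if "s \<in> I" for s
    using has_vector_derivative_plane_normal[OF that] tilts[OF that]
    by (simp add: has_vector_derivative_at_within)
  then obtain n where "\<And>s. s \<in> I \<Longrightarrow> plane_normal s = n"
    using has_vector_derivative_zero_constant[OF is_interval_convex[OF assms(1)]] by blast
  then show ?thesis
    using assms(3,4) by simp
qed

end

section \<open>\<open>\<phi>\<close>-minimal cyclic surfaces\<close>

locale phi_minimal_cyclic = cyclic_frame +
  fixes J :: "real set" and v :: "real^3"
  assumes open_J: "open J" and J_ne: "J \<noteq> {}" and v_ne: "v \<noteq> 0"
    and regular: "\<And>s t. s \<in> I \<Longrightarrow> t \<in> J \<Longrightarrow> cross3 (Xs X s t) (Xt X s t) \<noteq> 0"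
    and phi_minimal: "\<And>s t. s \<in> I \<Longrightarrow> t \<in> J \<Longrightarrow> mean_curv X s t = 1/2 * (unit_normal X s t \<bullet> v)"
begin

lemma phi_coeffs_eq_0:
  assumes "s \<in> I" "k \<le> 4"
  shows "coeff_cos v s k = 0 \<and> coeff_sin v s k = 0"
  using phi_minimal_imp_numerator_eq_0[OF regular phi_minimal] phi_mean_curv_numerator_cyclic_param
  by (intro trig_poly_eq_0_imp_coeffs_eq_0[OF open_J J_ne _ assms(2)]) (simp add: assms(1))

lemma no_open_set_with_tilted_planes_and_oblique_density:
  assumes "open U" "U \<subseteq> I" "s \<in> U"
    and oblique: "\<And>\<sigma>. \<sigma> \<in> U \<Longrightarrow> (tilt1 \<sigma>)\<^sup>2 + (tilt2 \<sigma>)\<^sup>2 > 0 \<and> (e1 \<sigma> \<bullet> v)\<^sup>2 + (e2 \<sigma> \<bullet> v)\<^sup>2 > 0"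
  shows False
proof -
  have s: "s \<in> I" and bd: "(tilt1 s)\<^sup>2 + (tilt2 s)\<^sup>2 > 0" and w: "(e1 s \<bullet> v)\<^sup>2 + (e2 s \<bullet> v)\<^sup>2 > 0"
    using assms by auto
  have tangency: "(e1 \<sigma> \<bullet> c' \<sigma>) * tilt1 \<sigma> + (e2 \<sigma> \<bullet> c' \<sigma>) * tilt2 \<sigma> = 0 \<and>
      (e1 \<sigma> \<bullet> c' \<sigma>)\<^sup>2 + (e2 \<sigma> \<bullet> c' \<sigma>)\<^sup>2 - (r \<sigma>)\<^sup>2 * ((tilt1 \<sigma>)\<^sup>2 + (tilt2 \<sigma>)\<^sup>2) = 0" if "\<sigma> \<in> U" for \<sigma>
    using phi_coeffs_deg4_eq_0D[OF phi_coeffs_eq_0[of \<sigma> 4, THEN conjunct1] phi_coeffs_eq_0[of \<sigma> 3, THEN conjunct2]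
        radius_pos oblique[OF that, THEN conjunct1] oblique[OF that, THEN conjunct2]] that assms(2)
    by auto
  obtain e where e: "e\<^sup>2 = 1" "e1 s \<bullet> c' s = e * r s * tilt2 s" "e2 s \<bullet> c' s = - e * r s * tilt1 s"
    using orthogonal_pair_eq_rotated[OF radius_pos[OF s] bd] tangency[OF assms(3)] by auto
  have "plane_normal s \<bullet> c' s = 0 \<and> r' s = 0"
    using phi_coeffs_deg3_eq_0D[OF phi_coeffs_eq_0[OF s, of 3, THEN conjunct1]
        phi_coeffs_eq_0[OF s, of 2, THEN conjunct2] radius_pos[OF s] bd w e] by simp
  moreover note const_on_U = has_real_derivative_const_on_open_eq_0[OF assms(1,3)]
    and derivs = has_real_derivative_tangency_relations[OF s]
  ultimately have "e1 s \<bullet> v = 0 \<and> e2 s \<bullet> v = 0"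
    using const_on_U[OF _ derivs(1)] const_on_U[OF _ derivs(2)] tangency
    by (intro phi_coeffs_deg2_eq_0D[OF phi_coeffs_eq_0[OF s, of 2, THEN conjunct1]
          phi_coeffs_eq_0[OF s, of 1, THEN conjunct2] radius_pos[OF s] bd e]) auto
  then show False
    using w by simp
qed

lemma tilts_eq_0:
  assumes "s \<in> I"
  shows "tilt1 s = 0 \<and> tilt2 s = 0"
proof (rule ccontr)
  assume tilted: "\<not> (tilt1 s = 0 \<and> tilt2 s = 0)"
  have cont: "continuous_on I tilt1" "continuous_on I tilt2"
    "continuous_on I (\<lambda>\<sigma>. e1 \<sigma> \<bullet> v)" "continuous_on I (\<lambda>\<sigma>. e2 \<sigma> \<bullet> v)"
    by (rule DERIV_continuous_on, rule has_field_derivative_at_within,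
        (rule has_real_derivative_tilts has_real_derivative_frame_inner[OF _ has_vector_derivative_const]),
        assumption)+
  define U0 where "U0 = I \<inter> (\<lambda>\<sigma>. (tilt1 \<sigma>)\<^sup>2 + (tilt2 \<sigma>)\<^sup>2) -` {0<..}"
  define U1 where "U1 = U0 \<inter> (\<lambda>\<sigma>. (e1 \<sigma> \<bullet> v)\<^sup>2 + (e2 \<sigma> \<bullet> v)\<^sup>2) -` {0<..}"
  have "s \<in> U0" "U1 \<subseteq> U0" "U0 \<subseteq> I"
    using assms tilted by (auto simp: U0_def U1_def sum_power2_gt_zero_iff)
  have "open U0"
    unfolding U0_def using cont
    by (intro continuous_open_preimage open_I open_greaterThan continuous_on_add continuous_on_power)
  have "continuous_on I (\<lambda>\<sigma>. (e1 \<sigma> \<bullet> v)\<^sup>2 + (e2 \<sigma> \<bullet> v)\<^sup>2)"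
    using cont by (intro continuous_on_add continuous_on_power)
  then have "open U1"
    unfolding U1_def using \<open>open U0\<close> \<open>U0 \<subseteq> I\<close>
    by (intro continuous_open_preimage open_greaterThan) (auto elim: continuous_on_subset)
  show False
  proof (cases "\<forall>\<sigma>\<in>U0. e1 \<sigma> \<bullet> v = 0 \<and> e2 \<sigma> \<bullet> v = 0")
    case True
    then show False
      using tilts_eq_0_if_normal_to_planes[OF v_ne \<open>open U0\<close> \<open>U0 \<subseteq> I\<close> \<open>s \<in> U0\<close>] tilted by simp
  next
    case False
    then obtain s1 where "s1 \<in> U1"
      by (auto simp: U1_def sum_power2_gt_zero_iff)
    then show False
      using no_open_set_with_tilted_planes_and_oblique_density[OF \<open>open U1\<close> _ \<open>s1 \<in> U1\<close>]
        \<open>U1 \<subseteq> U0\<close> \<open>U0 \<subseteq> I\<close> by (auto simp: U0_def U1_def)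
  qed
qed

end

theorem theorem1:
  fixes \<alpha> \<beta> \<gamma> :: real
    and c e1 e2 :: "real \<Rightarrow> real^3" and r :: "real \<Rightarrow> real"
    and I J :: "real set"
  assumes not_all_zero: "\<alpha> \<noteq> 0 \<or> \<beta> \<noteq> 0 \<or> \<gamma> \<noteq> 0"
    and I: "open I" "is_interval I" "I \<noteq> {}"
    and J: "open J" "is_interval J" "J \<noteq> {}"
    and smooth: "smooth_on I c" "smooth_on I r" "smooth_on I e1" "smooth_on I e2"
    and circles: "\<forall>s\<in>I. r s > 0 \<and> norm (e1 s) = 1 \<and> norm (e2 s) = 1 \<and> e1 s \<bullet> e2 s = 0"
    and regular: "\<forall>s\<in>I. \<forall>t\<in>J.
        cross3 (Xs (cyclic_param c r e1 e2) s t) (Xt (cyclic_param c r e1 e2) s t) \<noteq> 0"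
    and phi_minimal: "\<forall>s\<in>I. \<forall>t\<in>J.
        mean_curv (cyclic_param c r e1 e2) s t
          = 1/2 * (unit_normal (cyclic_param c r e1 e2) s t \<bullet> vector [\<alpha>, \<beta>, \<gamma>])"
  shows "\<forall>s1\<in>I. \<forall>s2\<in>I. cross3 (cross3 (e1 s1) (e2 s1)) (cross3 (e1 s2) (e2 s2)) = 0"
proof -
  obtain c' c'' where c: "\<And>s. s \<in> I \<Longrightarrow> (c has_vector_derivative c' s) (at s)"
    "\<And>s. s \<in> I \<Longrightarrow> (c' has_vector_derivative c'' s) (at s)"
    using smooth_on_imp_has_vector_derivative2[OF smooth(1) I(1)] by blast
  obtain r' r'' where r: "\<And>s. s \<in> I \<Longrightarrow> (r has_vector_derivative r' s) (at s)"
    "\<And>s. s \<in> I \<Longrightarrow> (r' has_vector_derivative r'' s) (at s)"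
    using smooth_on_imp_has_vector_derivative2[OF smooth(2) I(1)] by blast
  obtain e1' e1'' where e1: "\<And>s. s \<in> I \<Longrightarrow> (e1 has_vector_derivative e1' s) (at s)"
    "\<And>s. s \<in> I \<Longrightarrow> (e1' has_vector_derivative e1'' s) (at s)"
    using smooth_on_imp_has_vector_derivative2[OF smooth(3) I(1)] by blast
  obtain e2' e2'' where e2: "\<And>s. s \<in> I \<Longrightarrow> (e2 has_vector_derivative e2' s) (at s)"
    "\<And>s. s \<in> I \<Longrightarrow> (e2' has_vector_derivative e2'' s) (at s)"
    using smooth_on_imp_has_vector_derivative2[OF smooth(4) I(1)] by blast
  interpret phi_minimal_cyclic c c' c'' e1 e1' e1'' e2 e2' e2'' r r' r'' I J "vector [\<alpha>, \<beta>, \<gamma>]"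
    by unfold_locales
      (use I(1) J(1,3) c r e1 e2 circles regular phi_minimal not_all_zero in
        \<open>simp_all add: orthonormal_pair_def has_real_derivative_iff_has_vector_derivative\<close>)
  show ?thesis
    using plane_normal_const_if_tilts_eq_0[OF I(2) tilts_eq_0] unfolding plane_normal_def
    by (metis cross_refl)
qed

end
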